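(* With the setting in the context, a state $|\Psi\rangle\in\mathcal H$ belongs to the ground state subspace $\mathcal H_0$ if and only if $\Pi_0|\Psi\rangle=|\Psi\rangle$, where $\Pi_0=\mathcal A_0\mathcal B_0$.
   Context: $(C_\bullet,\partial^C_\bullet)$ is a chain complex with each $C_n$ free abelian on a finite set $K_n$, $K_n\ne\emptyset$ for finitely many $n$; $(G_\bullet,\partial^G_\bullet)$ is a chain complex of finite abelian groups. $\mathrm{hom}(C,G)^p=\prod_n\mathrm{Hom}(C_n,G_{n-p})$ with $(\delta^pf)_n=f_{n-1}\partial^C_n-(-1)^p\partial^G_{n-p}f_n$. $\mathrm{hom}(C,G)_p=\mathrm{Hom}(\mathrm{hom}(C,G)^p,U(1))$ (written additively, sum = pointwise product), $\chi_m(f)=m(f)$, $\delta_{p+1}m=m\circ\delta^p$. $\mathcal H=\bigotimes_n\bigotimes_{x\in K_n}\mathbb C[G_n]$ with orthonormal basis $|f\rangle$, $f\in\mathrm{hom}(C,G)^0$ ($|f\rangle=\otimes|f_n(x)\rangle$). $P_t|f\rangle=|f+t\rangle$, $Q_m|f\rangle=\chi_m(f)|f\rangle$; $A_t=P_{\delta^{-1}t}$ for $t\in\mathrm{hom}(C,G)^{-1}$, $B_m=Q_{\delta_1m}$ for $m\in\mathrm{hom}(C,G)_1$. For $s\in\mathrm{hom}(C,G)_{-1}$ and $v\in\mathrm{hom}(C,G)^1$: $\mathcal A_s=\frac1{|\mathrm{hom}(C,G)^{-1}|}\sum_{t\in\mathrm{hom}(C,G)^{-1}}\chi_s(t)A_t$,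 $\mathcal B_v=\frac1{|\mathrm{hom}(C,G)_1|}\sum_{m\in\mathrm{hom}(C,G)_1}\chi_m(v)B_m$; $\mathcal A_0,\mathcal B_0$ are these for $s=0$, $v=0$. Local elements: for $x\in K_n$, $g\in G_{n-p}$, $gx^*\in\mathrm{hom}(C,G)^p$ has $n$-th component sending $x\mapsto g$, other basis elements to $0$, other components $0$; for $r\in\mathrm{Hom}(G_{n-p},U(1))$, $rx_*\in\mathrm{hom}(C,G)_p$, $rx_*(f)=r(f_n(x))$. For $x\in K_n$: $A_x^r=\frac1{|G_{n+1}|}\sum_{h\in G_{n+1}}r(h)A_{hx^*}$ ($r\in\mathrm{Hom}(G_{n+1},U(1))$), $B_x^g=\frac1{|G_{n-1}|}\sum_{r\in\mathrm{Hom}(G_{n-1},U(1))}r(g)B_{rx_*}$ ($g\in G_{n-1}$). Ground state subspace: $\mathcal H_0=\{\Psi: A_x^0\Psi=B_x^0\Psi=\Psi\ \forall n,\forall x\in K_n\}$. *)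

theory Defs
  imports Complex_Main "HOL-Library.Function_Algebras"
begin

definition zmul :: "int \<Rightarrow> 'g::ab_group_add \<Rightarrow> 'g" where
  "zmul k g = (if 0 \<le> k then (((+) g) ^^ nat k) 0 else - ((((+) g) ^^ nat (- k)) 0))"

text \<open>Chain complex C: C n is free abelian on the finite set K n; the boundary is
  given by its integer matrix: dC n x y is the coefficient of y (in K (n-1)) in the
  boundary of x (in K n).\<close>
definition free_chain_complex :: "(int \<Rightarrow> 'k set) \<Rightarrow> (int \<Rightarrow> 'k \<Rightarrow> 'k \<Rightarrow> int) \<Rightarrow> bool" where
  "free_chain_complex K dC \<longleftrightarrow>
     (\<forall>n. finite (K n)) \<and> finite {n. K n \<noteq> {}} \<and>
     (\<forall>n. \<forall>x\<in>K n. \<forall>z\<in>K (n - 2). (\<Sum>y\<in>K (n - 1). dC n x y * dC (n - 1) y z) = 0)"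

definition finite_group_chain_complex :: "(int \<Rightarrow> 'g::ab_group_add set) \<Rightarrow> (int \<Rightarrow> 'g \<Rightarrow> 'g) \<Rightarrow> bool" where
  "finite_group_chain_complex G dG \<longleftrightarrow>
     (\<forall>n. finite (G n) \<and> 0 \<in> G n \<and> (\<forall>a\<in>G n. \<forall>b\<in>G n. a + b \<in> G n) \<and> (\<forall>a\<in>G n. - a \<in> G n)) \<and>
     (\<forall>n. \<forall>a\<in>G n. dG n a \<in> G (n - 1)) \<and>
     (\<forall>n. \<forall>a\<in>G n. \<forall>b\<in>G n. dG n (a + b) = dG n a + dG n b) \<and>
     (\<forall>n. \<forall>a\<in>G n. dG (n - 1) (dG n a) = 0)"

text \<open>hom(C,G)^p = prod_n Hom(C_n, G_{n-p}); a homomorphism on the free group C_n is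
  identified with its values on the basis K n (extended by 0 off K n).\<close>
definition cochains :: "(int \<Rightarrow> 'k set) \<Rightarrow> (int \<Rightarrow> 'g::ab_group_add set) \<Rightarrow> int \<Rightarrow> (int \<Rightarrow> 'k \<Rightarrow> 'g) set" where
  "cochains K G p = {f. (\<forall>n. \<forall>x\<in>K n. f n x \<in> G (n - p)) \<and> (\<forall>n x. x \<notin> K n \<longrightarrow> f n x = 0)}"

text \<open>(delta^p f)_n = f_{n-1} \<circ> dC_n - (-1)^p dG_{n-p} \<circ> f_n.\<close>
definition coboundary :: "(int \<Rightarrow> 'k set) \<Rightarrow> (int \<Rightarrow> 'k \<Rightarrow> 'k \<Rightarrow> int) \<Rightarrow> (int \<Rightarrow> 'g::ab_group_add \<Rightarrow> 'g)
    \<Rightarrow> int \<Rightarrow> (int \<Rightarrow> 'k \<Rightarrow> 'g) \<Rightarrow> (int \<Rightarrow> 'k \<Rightarrow> 'g)" where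
  "coboundary K dC dG p f = (\<lambda>n x. if x \<in> K n then
      (\<Sum>y\<in>K (n - 1). zmul (dC n x y) (f (n - 1) y))
        - (if even p then dG (n - p) (f n x) else - dG (n - p) (f n x))
     else 0)"

text \<open>U(1)-valued characters of a subgroup A (as unit complex numbers, multiplication
  being the group law), extended by 0 outside A.\<close>
definition characters :: "'a::plus set \<Rightarrow> ('a \<Rightarrow> complex) set" where
  "characters A = {m. (\<forall>a\<in>A. \<forall>b\<in>A. m (a + b) = m a * m b) \<and> (\<forall>a\<in>A. cmod (m a) = 1)
                      \<and> (\<forall>a. a \<notin> A \<longrightarrow> m a = 0)}"

definition chains_dual :: "(int \<Rightarrow> 'k set) \<Rightarrow> (int \<Rightarrow> 'g::ab_group_add set) \<Rightarrow> int \<Rightarrow> ((int \<Rightarrow> 'k \<Rightarrow> 'g) \<Rightarrow> complex) set" where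
  "chains_dual K G p = characters (cochains K G p)"

text \<open>delta_{p+1} m = m \<circ> delta^p (as an element of hom(C,G)_p).\<close>
definition dual_boundary where
  "dual_boundary K dC G dG p m = (\<lambda>f. if f \<in> cochains K G p then m (coboundary K dC dG p f) else 0)"

text \<open>The Hilbert space: complex amplitudes on the basis |f>, f \<in> hom(C,G)^0.\<close>
definition hilb :: "(int \<Rightarrow> 'k set) \<Rightarrow> (int \<Rightarrow> 'g::ab_group_add set) \<Rightarrow> ((int \<Rightarrow> 'k \<Rightarrow> 'g) \<Rightarrow> complex) set" where
  "hilb K G = {\<Psi>. \<forall>f. f \<notin> cochains K G 0 \<longrightarrow> \<Psi> f = 0}"

text \<open>P_t |f> = |f + t>, Q_m |f> = chi_m(f) |f>.\<close>
definition Pop :: "(int \<Rightarrow> 'k \<Rightarrow> 'g::ab_group_add) \<Rightarrow> ((int \<Rightarrow> 'k \<Rightarrow> 'g) \<Rightarrow> complex) \<Rightarrow> ((int \<Rightarrow> 'k \<Rightarrow> 'g) \<Rightarrow> complex)" where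
  "Pop t \<Psi> = (\<lambda>h. \<Psi> (h - t))"

definition Qop :: "((int \<Rightarrow> 'k \<Rightarrow> 'g) \<Rightarrow> complex) \<Rightarrow> ((int \<Rightarrow> 'k \<Rightarrow> 'g) \<Rightarrow> complex) \<Rightarrow> ((int \<Rightarrow> 'k \<Rightarrow> 'g) \<Rightarrow> complex)" where
  "Qop m \<Psi> = (\<lambda>f. m f * \<Psi> f)"

definition Aop where "Aop K dC dG t = Pop (coboundary K dC dG (-1) t)"
definition Bop where "Bop K dC G dG m = Qop (dual_boundary K dC G dG 0 m)"

text \<open>The projectors \<A>_0 and \<B>_0 (s = 0, v = 0, so the characters are 1).\<close>
definition calA0 where
  "calA0 K dC G dG \<Psi> = (\<lambda>h. (\<Sum>t\<in>cochains K G (-1). Aop K dC dG t \<Psi> h) / of_nat (card (cochains K G (-1))))"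

definition calB0 where
  "calB0 K dC G dG \<Psi> = (\<lambda>h. (\<Sum>m\<in>chains_dual K G 1. Bop K dC G dG m \<Psi> h) / of_nat (card (chains_dual K G 1)))"

definition Pi0 where "Pi0 K dC G dG \<Psi> = calA0 K dC G dG (calB0 K dC G dG \<Psi>)"

definition local_cochain :: "int \<Rightarrow> 'k \<Rightarrow> 'g::zero \<Rightarrow> (int \<Rightarrow> 'k \<Rightarrow> 'g)" where
  "local_cochain n x g = (\<lambda>m y. if m = n \<and> y = x then g else 0)"

definition local_chain where
  "local_chain K G p n x r = (\<lambda>f. if f \<in> cochains K G p then r (f n x) else 0)"

definition Ax0 where
  "Ax0 K dC G dG n x \<Psi> = (\<lambda>h. (\<Sum>g\<in>G (n + 1). Aop K dC dG (local_cochain n x g) \<Psi> h) / of_nat (card (G (n + 1))))"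

definition Bx0 where
  "Bx0 K dC G dG n x \<Psi> = (\<lambda>h. (\<Sum>r\<in>characters (G (n - 1)). Bop K dC G dG (local_chain K G 1 n x r) \<Psi> h)
                              / of_nat (card (G (n - 1))))"

definition ground_space where
  "ground_space K dC G dG = {\<Psi> \<in> hilb K G. \<forall>n. \<forall>x\<in>K n. Ax0 K dC G dG n x \<Psi> = \<Psi> \<and> Bx0 K dC G dG n x \<Psi> = \<Psi>}"

end

theory Submission
  imports Defs "HOL-Library.Indicator_Function"
begin

text \<open>Both sides say that \<open>\<Psi>\<close> is invariant under translation by every coboundary \<open>\<delta> t\<close>,
  \<open>t \<in> hom(C,G)\<^sup>-\<^sup>1\<close>, and is supported on 0-cocycles. By the orthogonality of characters,
  \<open>\<B>\<^sub>0\<close> and \<open>B\<^sub>x\<^sup>0\<close> multiply \<open>|f\<rangle>\<close> by the indicator of \<open>\<delta> f = 0\<close>, resp. \<open>(\<delta> f)\<^sub>n(x) = 0\<close>, while \<open>\<A>\<^sub>0\<close>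
  and \<open>A\<^sub>x\<^sup>0\<close> average over translates by the image under \<open>\<delta>\<close> of a finite group; a vector equals
  such an average iff it is invariant under these translates. The local cochains \<open>g x\<^sup>*\<close> generate
  \<open>hom(C,G)\<^sup>-\<^sup>1\<close>, and \<open>\<delta>\<delta> = 0\<close> lets \<open>\<B>\<^sub>0\<close> commute with the translations in \<open>\<Pi>\<^sub>0 = \<A>\<^sub>0\<B>\<^sub>0\<close>.
  Orthogonality, and the equality \<open>|Hom(A,U(1))| = |A|\<close> behind the normalisation of \<open>B\<^sub>x\<^sup>0\<close>, need
  enough characters to separate points; these are built by extending characters one cyclic
  step at a time.\<close>

lemma zmul_0 [simp]: "zmul 0 g = 0"
  by (simp add: zmul_def)

lemma zmul_succ: "zmul (k + 1) g = zmul k g + (g::'g::ab_group_add)"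
proof (cases "k \<ge> 0")
  case True
  then have "nat (k + 1) = Suc (nat k)" by simp
  then show ?thesis using True by (simp add: zmul_def add.commute)
next
  case False
  show ?thesis
  proof (cases "k = -1")
    case True then show ?thesis by (simp add: zmul_def)
  next
    case k: False
    then have "nat (-k) = Suc (nat (-(k + 1)))" using False by simp
    then show ?thesis using False k by (simp add: zmul_def algebra_simps)
  qed
qed

lemma zmul_pred: "zmul (k - 1) g = zmul k g - (g::'g::ab_group_add)"
  using zmul_succ[of "k - 1" g] by (simp add: algebra_simps)

lemma zmul_1 [simp]: "zmul 1 g = (g::'g::ab_group_add)"
  using zmul_succ[of 0 g] by simp

lemma zmul_add_left: "zmul (a + b) g = zmul a g + zmul b (g::'g::ab_group_add)"
proof (induction b rule: int_induct[where k = 0])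
  case base then show ?case by simp
next
  case (step1 i)
  have "zmul (a + (i + 1)) g = zmul (a + i) g + g"
    using zmul_succ[of "a + i" g] by (simp add: add.assoc)
  then show ?case using step1 zmul_succ[of i g] by (simp add: add.assoc)
next
  case (step2 i)
  have "zmul (a + (i - 1)) g = zmul (a + i - 1) g" by (simp add: algebra_simps)
  also have "\<dots> = zmul a g + zmul i g - g" using step2 zmul_pred[of "a + i" g] by simp
  finally show ?case using zmul_pred[of i g] by (metis add_diff_eq)
qed

lemma zmul_add_right: "zmul k (g + h) = zmul k g + zmul k (h::'g::ab_group_add)"
proof (induction k rule: int_induct[where k = 0])
  case base then show ?case by simp
next
  case (step1 i) then show ?case unfolding zmul_succ by (simp add: algebra_simps)
next
  case (step2 i) then show ?case unfolding zmul_pred by (simp add: algebra_simps)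
qed

lemma zmul_zero_right [simp]: "zmul k (0::'g::ab_group_add) = 0"
  using zmul_add_right[of k 0 0] by simp

lemma zmul_minus_left: "zmul (- a) g = - zmul a (g::'g::ab_group_add)"
  using zmul_add_left[of a "- a" g] by (simp add: eq_neg_iff_add_eq_0 add.commute)

lemma zmul_mult: "zmul (a * b) g = zmul a (zmul b (g::'g::ab_group_add))"
proof (induction a rule: int_induct[where k = 0])
  case base then show ?case by simp
next
  case (step1 i)
  have "zmul ((i + 1) * b) g = zmul (i * b) g + zmul b g"
    using zmul_add_left[of "i * b" b g] by (simp add: algebra_simps)
  then show ?case using step1 unfolding zmul_succ by simp
next
  case (step2 i)
  have "zmul ((i - 1) * b) g + zmul b g = zmul (i * b) g"
    using zmul_add_left[of "(i - 1) * b" b g] by (simp add: algebra_simps)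
  then show ?case using step2 unfolding zmul_pred by (simp add: algebra_simps)
qed

lemma zmul_sum_right: "zmul k (\<Sum>i\<in>S. f i) = (\<Sum>i\<in>S. zmul k (f i :: 'g::ab_group_add))"
  by (induction S rule: infinite_finite_induct) (auto simp: zmul_add_right)

lemma zmul_sum_left: "zmul (\<Sum>i\<in>S. f i) g = (\<Sum>i\<in>S. zmul (f i) (g :: 'g::ab_group_add))"
  by (induction S rule: infinite_finite_induct) (auto simp: zmul_add_left)

lemma sum_apply: "(\<Sum>i\<in>S. f i) x = (\<Sum>i\<in>S. f i x)"
  by (induction S rule: infinite_finite_induct) auto

definition add_subgroup :: "'g::ab_group_add set \<Rightarrow> bool" where
  "add_subgroup A \<longleftrightarrow> 0 \<in> A \<and> (\<forall>a\<in>A. \<forall>b\<in>A. a + b \<in> A) \<and> (\<forall>a\<in>A. - a \<in> A)"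

lemma add_subgroup_zero: "add_subgroup A \<Longrightarrow> 0 \<in> A"
  by (simp add: add_subgroup_def)

lemma add_subgroup_add: "add_subgroup A \<Longrightarrow> a \<in> A \<Longrightarrow> b \<in> A \<Longrightarrow> a + b \<in> A"
  by (simp add: add_subgroup_def)

lemma add_subgroup_minus: "add_subgroup A \<Longrightarrow> a \<in> A \<Longrightarrow> - a \<in> A"
  by (simp add: add_subgroup_def)

lemma add_subgroup_diff: "add_subgroup A \<Longrightarrow> a \<in> A \<Longrightarrow> b \<in> A \<Longrightarrow> a - b \<in> A"
  using add_subgroup_add[of A a "- b"] add_subgroup_minus[of A b] by simp

lemma add_subgroup_sum: "add_subgroup A \<Longrightarrow> (\<And>i. i \<in> S \<Longrightarrow> f i \<in> A) \<Longrightarrow> (\<Sum>i\<in>S. f i) \<in> A"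
  by (induction S rule: infinite_finite_induct) (auto simp: add_subgroup_zero add_subgroup_add)

lemma add_subgroup_zmul: "add_subgroup A \<Longrightarrow> a \<in> A \<Longrightarrow> zmul k a \<in> A"
proof (induction k rule: int_induct[where k = 0])
  case base then show ?case by (simp add: add_subgroup_zero)
next
  case (step1 i) then show ?case by (simp add: zmul_succ add_subgroup_add)
next
  case (step2 i) then show ?case by (simp add: zmul_pred add_subgroup_diff)
qed

lemma sum_translate:
  assumes "finite A" "add_subgroup A" "b \<in> A"
  shows "(\<Sum>a\<in>A. F (b + a)) = (\<Sum>a\<in>A. F a)"
proof -
  have inj: "inj_on ((+) b) A" by (auto simp: inj_on_def)
  have "(+) b ` A \<subseteq> A" using add_subgroup_add[OF assms(2,3)] by auto
  then have "(+) b ` A = A" using endo_inj_surj[OF assms(1) _ inj] by blast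
  then show ?thesis using sum.reindex[OF inj, of F] by simp
qed

definition additive_on :: "'a::plus set \<Rightarrow> ('a \<Rightarrow> 'b::plus) \<Rightarrow> bool" where
  "additive_on A \<phi> \<longleftrightarrow> (\<forall>a\<in>A. \<forall>b\<in>A. \<phi> (a + b) = \<phi> a + \<phi> b)"

lemma additive_onD: "additive_on A \<phi> \<Longrightarrow> a \<in> A \<Longrightarrow> b \<in> A \<Longrightarrow> \<phi> (a + b) = \<phi> a + \<phi> b"
  by (simp add: additive_on_def)

lemma additive_on_zero:
  fixes \<phi> :: "'a::ab_group_add \<Rightarrow> 'b::ab_group_add"
  assumes "add_subgroup A" "additive_on A \<phi>"
  shows "\<phi> 0 = 0"
  using additive_onD[OF assms(2), of 0 0] add_subgroup_zero[OF assms(1)] by simp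

lemma additive_on_zmul:
  fixes \<phi> :: "'a::ab_group_add \<Rightarrow> 'b::ab_group_add"
  assumes A: "add_subgroup A" and \<phi>: "additive_on A \<phi>" and a: "a \<in> A"
  shows "\<phi> (zmul k a) = zmul k (\<phi> a)"
proof (induction k rule: int_induct[where k = 0])
  case base then show ?case using additive_on_zero[OF A \<phi>] by simp
next
  case (step1 i)
  then show ?case using additive_onD[OF \<phi> add_subgroup_zmul[OF A a] a] by (simp add: zmul_succ)
next
  case (step2 i)
  have "\<phi> (zmul i a) = \<phi> (zmul (i - 1) a) + \<phi> a"
    using additive_onD[OF \<phi> add_subgroup_zmul[OF A a] a, of "i - 1"] by (simp add: zmul_pred)
  then show ?case using step2 by (simp add: zmul_pred algebra_simps)
qed

lemma additive_on_sum:
  fixes \<phi> :: "'a::ab_group_add \<Rightarrow> 'b::ab_group_add"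
  assumes A: "add_subgroup A" and \<phi>: "additive_on A \<phi>" and f: "\<And>i. i \<in> S \<Longrightarrow> f i \<in> A"
  shows "\<phi> (\<Sum>i\<in>S. f i) = (\<Sum>i\<in>S. \<phi> (f i))"
  using f
proof (induction S rule: infinite_finite_induct)
  case (insert i S)
  then show ?case using additive_onD[OF \<phi>] add_subgroup_sum[OF A, of S f] by simp
qed (simp_all add: additive_on_zero[OF A \<phi>])

lemma additive_on_diff:
  fixes \<phi> :: "'a::ab_group_add \<Rightarrow> 'b::ab_group_add"
  assumes A: "add_subgroup A" and \<phi>: "additive_on A \<phi>" and "a \<in> A" "b \<in> A"
  shows "\<phi> (a - b) = \<phi> a - \<phi> b"
  using additive_onD[OF \<phi> add_subgroup_diff[OF A assms(3,4)] assms(4)] by (simp add: algebra_simps)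

lemma average_translates_invariant:
  fixes \<phi> :: "'a::ab_group_add \<Rightarrow> 'b::ab_group_add" and \<Phi> :: "'b \<Rightarrow> complex"
  assumes A: "finite A" "add_subgroup A" and \<phi>: "additive_on A \<phi>"
    and avg: "\<And>h. \<Psi> h = (\<Sum>a\<in>A. \<Phi> (h - \<phi> a)) / of_nat (card A)" and a0: "a0 \<in> A"
  shows "\<Psi> (h - \<phi> a0) = \<Psi> h"
proof -
  have "(\<Sum>a\<in>A. \<Phi> (h - \<phi> a0 - \<phi> a)) = (\<Sum>a\<in>A. \<Phi> (h - \<phi> (a0 + a)))"
    using additive_onD[OF \<phi> a0] by (intro sum.cong) (auto simp: algebra_simps)
  also have "\<dots> = (\<Sum>a\<in>A. \<Phi> (h - \<phi> a))"
    by (rule sum_translate[OF A a0, where F = "\<lambda>a. \<Phi> (h - \<phi> a)"])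
  finally show ?thesis using avg[of "h - \<phi> a0"] avg[of h] by simp
qed

lemma invariant_sum:
  fixes d :: "'i \<Rightarrow> 'a::ab_group_add"
  assumes "\<And>i h. i \<in> S \<Longrightarrow> \<Psi> (h - d i) = \<Psi> h"
  shows "\<Psi> (h - (\<Sum>i\<in>S. d i)) = \<Psi> h"
  using assms
proof (induction S arbitrary: h rule: infinite_finite_induct)
  case (insert i S)
  have "\<Psi> (h - (\<Sum>j\<in>insert i S. d j)) = \<Psi> ((h - (\<Sum>j\<in>S. d j)) - d i)"
    using insert(1,2) by (simp add: algebra_simps)
  also have "\<dots> = \<Psi> h" using insert by simp
  finally show ?case .
qed simp_all
lemma exists_zmul_period:
  assumes "finite A" "add_subgroup A" "a \<in> A"
  shows "\<exists>k::nat. 0 < k \<and> zmul (int k) a = 0"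
proof -
  let ?f = "\<lambda>j::nat. zmul (int j) a"
  have "range ?f \<subseteq> A" using add_subgroup_zmul[OF assms(2,3)] by auto
  then have "\<not> inj ?f" using assms(1) finite_subset finite_imageD infinite_UNIV_nat by blast
  then obtain i j where ij: "i < j" "?f i = ?f j" unfolding inj_def by (metis linorder_neqE_nat)
  have "zmul (int j) a = zmul (int j - int i) a + zmul (int i) a"
    using zmul_add_left[of "int j - int i" "int i" a] by simp
  then show ?thesis using ij by (intro exI[of _ "j - i"]) (simp add: of_nat_diff)
qed

lemma exists_least_zmul_in_subgroup:
  assumes "finite A" "add_subgroup A" "add_subgroup H" "g \<in> A"
  shows "\<exists>k::nat. 0 < k \<and> zmul (int k) g \<in> H \<and> (\<forall>r. 0 < r \<and> r < k \<longrightarrow> zmul (int r) g \<notin> H)"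
proof -
  let ?P = "\<lambda>k::nat. 0 < k \<and> zmul (int k) g \<in> H"
  obtain k0 where "0 < k0" "zmul (int k0) g = 0" using exists_zmul_period[OF assms(1,2,4)] by blast
  then have "?P k0" using add_subgroup_zero[OF assms(3)] by simp
  then have "?P (LEAST k. ?P k)" by (rule LeastI)
  then show ?thesis using not_less_Least by blast
qed

lemma characters_mult: "m \<in> characters A \<Longrightarrow> a \<in> A \<Longrightarrow> b \<in> A \<Longrightarrow> m (a + b) = m a * m b"
  by (simp add: characters_def)

lemma characters_norm: "m \<in> characters A \<Longrightarrow> a \<in> A \<Longrightarrow> cmod (m a) = 1"
  by (simp add: characters_def)

lemma characters_outside: "m \<in> characters A \<Longrightarrow> a \<notin> A \<Longrightarrow> m a = 0"
  by (simp add: characters_def)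

lemma characters_nonzero: "m \<in> characters A \<Longrightarrow> a \<in> A \<Longrightarrow> m a \<noteq> 0"
  using characters_norm by fastforce

lemma characters_zero: assumes "add_subgroup A" "m \<in> characters A" shows "m 0 = 1"
proof -
  have "m 0 = m 0 * m 0" using characters_mult[OF assms(2), of 0 0] add_subgroup_zero[OF assms(1)] by simp
  then show ?thesis using characters_nonzero[OF assms(2) add_subgroup_zero[OF assms(1)]] by simp
qed

lemma characters_zmul:
  assumes A: "add_subgroup A" and m: "m \<in> characters A" and a: "a \<in> A"
  shows "m (zmul k a) = m a powi k"
proof (induction k rule: int_induct[where k = 0])
  case base then show ?case using characters_zero[OF A m] by simp
next
  case (step1 i)
  have "m (zmul (i + 1) a) = m (zmul i a) * m a"
    unfolding zmul_succ using characters_mult[OF m add_subgroup_zmul[OF A a] a] by simp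
  then show ?case using step1 power_int_add[of "m a" i 1] characters_nonzero[OF m a] by simp
next
  case (step2 i)
  have "m (zmul i a) = m (zmul (i - 1) a) * m a"
    using characters_mult[OF m add_subgroup_zmul[OF A a] a, of "i - 1"] by (simp add: zmul_pred)
  moreover have "m a powi i = m a powi (i - 1) * m a"
    using power_int_add[of "m a" "i - 1" 1] characters_nonzero[OF m a] by simp
  ultimately show ?case using step2 characters_nonzero[OF m a] by simp
qed

lemma indicator_in_characters: "add_subgroup A \<Longrightarrow> indicator A \<in> characters A"
  by (auto simp: characters_def indicator_def add_subgroup_add)

text \<open>Every value of a character is a root of unity whose order is a period of its argument.\<close>
lemma finite_characters:
  fixes A :: "'g::ab_group_add set"
  assumes A: "finite A" "add_subgroup A"
  shows "finite (characters A)"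
proof -
  define per where "per a = (SOME k::nat. 0 < k \<and> zmul (int k) a = 0)" for a :: 'g
  have per: "0 < per a \<and> zmul (int (per a)) a = 0" if "a \<in> A" for a
    unfolding per_def using someI_ex[OF exists_zmul_period[OF A that]] .
  define R where "R = (\<Union>a\<in>A. {z::complex. z ^ per a = 1})"
  have "finite R"
    unfolding R_def using A(1) per by (auto intro!: finite_roots_unity simp: Suc_le_eq)
  have "characters A \<subseteq> {f. \<forall>x. (x \<in> A \<longrightarrow> f x \<in> R) \<and> (x \<notin> A \<longrightarrow> f x = 0)}"
  proof safe
    fix m x assume m: "m \<in> characters A" and x: "x \<in> A"
    have "m x ^ per x = m (zmul (int (per x)) x)" using characters_zmul[OF A(2) m x] by simp
    also have "\<dots> = 1" using per[OF x] characters_zero[OF A(2) m] by simp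
    finally show "m x \<in> R" unfolding R_def using x by blast
  qed (rule characters_outside)
  then show ?thesis using finite_set_of_finite_funs[OF A(1) \<open>finite R\<close>] finite_subset by blast
qed

lemma cis_Arg_root_power:
  assumes "cmod c = 1" "0 < k"
  shows "cis (Arg c / real k) ^ k = c"
proof -
  have "cis (Arg c / real k) ^ k = cis (Arg c)" using assms(2) by (simp add: DeMoivre)
  also have "\<dots> = sgn c" using assms(1) by (intro cis_Arg) auto
  also have "\<dots> = c" using assms(1) by (simp add: sgn_eq)
  finally show ?thesis .
qed

definition subgroup_adjoin :: "'g::ab_group_add set \<Rightarrow> 'g \<Rightarrow> 'g set" where
  "subgroup_adjoin H g = {h + zmul j g | h j. h \<in> H}"

lemma add_subgroup_adjoin: assumes H: "add_subgroup H" shows "add_subgroup (subgroup_adjoin H g)"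
  unfolding add_subgroup_def subgroup_adjoin_def
proof (intro conjI ballI)
  show "0 \<in> {h + zmul j g |h j. h \<in> H}"
    using add_subgroup_zero[OF H] by (intro CollectI exI[of _ 0]) auto
next
  fix a b assume "a \<in> {h + zmul j g |h j. h \<in> H}" "b \<in> {h + zmul j g |h j. h \<in> H}"
  then obtain h1 j1 h2 j2 where "a = h1 + zmul j1 g" "b = h2 + zmul j2 g" "h1 \<in> H" "h2 \<in> H" by blast
  then show "a + b \<in> {h + zmul j g |h j. h \<in> H}"
    by (intro CollectI exI[of _ "h1 + h2"] exI[of _ "j1 + j2"])
       (auto simp: zmul_add_left add_subgroup_add[OF H] algebra_simps)
next
  fix a assume "a \<in> {h + zmul j g |h j. h \<in> H}"
  then obtain h j where "a = h + zmul j g" "h \<in> H" by blast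
  then show "- a \<in> {h + zmul j g |h j. h \<in> H}"
    by (intro CollectI exI[of _ "- h"] exI[of _ "- j"]) (auto simp: zmul_minus_left add_subgroup_minus[OF H])
qed

lemma subgroup_adjoin_subset: "add_subgroup A \<Longrightarrow> H \<subseteq> A \<Longrightarrow> g \<in> A \<Longrightarrow> subgroup_adjoin H g \<subseteq> A"
  unfolding subgroup_adjoin_def using add_subgroup_add add_subgroup_zmul by blast

lemma subgroup_adjoin_base: "h \<in> H \<Longrightarrow> h \<in> subgroup_adjoin H g"
  unfolding subgroup_adjoin_def by (intro CollectI exI[of _ h] exI[of _ 0]) simp

lemma subgroup_adjoin_generator: "add_subgroup H \<Longrightarrow> g \<in> subgroup_adjoin H g"
  unfolding subgroup_adjoin_def using add_subgroup_zero by (intro CollectI exI[of _ 0] exI[of _ 1]) auto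

lemma subgroup_adjoin_eq_imp_dvd:
  assumes H: "add_subgroup H" and k: "0 < k" "zmul (int k) g \<in> H"
    and kmin: "\<forall>r. 0 < r \<and> r < k \<longrightarrow> zmul (int r) g \<notin> H"
    and hh: "h \<in> H" "h' \<in> H" and eq: "h + zmul j g = h' + zmul j' g"
  shows "\<exists>q. j - j' = int k * q \<and> h' = h + zmul q (zmul (int k) g)"
proof -
  define q where "q = (j - j') div int k"
  define r where "r = (j - j') mod int k"
  have "zmul j g = zmul (j - j') g + zmul j' g" using zmul_add_left[of "j - j'" j' g] by simp
  then have zd: "zmul (j - j') g = h' - h" using eq by (simp add: algebra_simps)
  have dqr: "j - j' = q * int k + r" unfolding q_def r_def by simp
  have r0: "0 \<le> r" "r < int k" unfolding r_def using k by auto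
  have "zmul (j - j') g = zmul q (zmul (int k) g) + zmul r g"
    unfolding dqr zmul_add_left zmul_mult ..
  then have "zmul r g = (h' - h) - zmul q (zmul (int k) g)" using zd by (simp add: algebra_simps)
  then have "zmul (int (nat r)) g \<in> H"
    using add_subgroup_diff[OF H add_subgroup_diff[OF H hh(2,1)] add_subgroup_zmul[OF H k(2)]] r0 by simp
  have "r = 0"
  proof (rule ccontr)
    assume "r \<noteq> 0"
    then have "0 < nat r" "nat r < k" using r0 by auto
    then show False using kmin \<open>zmul (int (nat r)) g \<in> H\<close> by blast
  qed
  then have "j - j' = int k * q" using dqr by simp
  moreover have "h' = h + zmul q (zmul (int k) g)"
    using zd calculation zmul_mult[of q "int k" g] by (simp add: algebra_simps)
  ultimately show ?thesis by blast
qed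

text \<open>As \<open>h + j g\<close> determines \<open>j\<close> modulo \<open>k\<close> and \<open>h\<close> up to the matching multiple of \<open>k g\<close>, the
  extension \<open>\<psi> (h + j g) = \<chi> h w^j\<close> is well defined as soon as \<open>w^k = \<chi> (k g)\<close>.\<close>
lemma character_extend_adjoin:
  assumes H: "add_subgroup H" and \<chi>: "\<chi> \<in> characters H"
    and w: "cmod w = 1" and k: "0 < k" "zmul (int k) g \<in> H"
    and kmin: "\<forall>r. 0 < r \<and> r < k \<longrightarrow> zmul (int r) g \<notin> H"
    and wk: "w ^ k = \<chi> (zmul (int k) g)"
  shows "\<exists>\<psi> \<in> characters (subgroup_adjoin H g). (\<forall>h\<in>H. \<psi> h = \<chi> h) \<and> \<psi> g = w"
proof -
  have wnz: "w \<noteq> 0" using w by auto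
  have well_defined: "\<chi> h * w powi j = \<chi> h' * w powi j'"
    if hh: "h \<in> H" "h' \<in> H" and eq: "h + zmul j g = h' + zmul j' g" for h h' j j'
  proof -
    obtain q where dq: "j - j' = int k * q" and h': "h' = h + zmul q (zmul (int k) g)"
      using subgroup_adjoin_eq_imp_dvd[OF H k kmin hh eq] by blast
    have "\<chi> h' = \<chi> h * \<chi> (zmul (int k) g) powi q"
      unfolding h' using characters_mult[OF \<chi> hh(1) add_subgroup_zmul[OF H k(2)]] characters_zmul[OF H \<chi> k(2)]
      by simp
    also have "\<dots> = \<chi> h * w powi (int k * q)" unfolding wk[symmetric] by (simp add: power_int_mult)
    finally have "\<chi> h' = \<chi> h * w powi (int k * q)" .
    moreover have "w powi j = w powi j' * w powi (int k * q)"
      using power_int_add[of w j' "int k * q"] wnz dq by (simp add: algebra_simps)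
    ultimately show ?thesis by (simp add: algebra_simps)
  qed
  let ?S = "subgroup_adjoin H g"
  define rep where "rep x = (SOME p. fst p \<in> H \<and> x = fst p + zmul (snd p) g)" for x
  define \<psi> where "\<psi> x = (if x \<in> ?S then \<chi> (fst (rep x)) * w powi (snd (rep x)) else 0)" for x
  have val: "\<psi> (h + zmul j g) = \<chi> h * w powi j" if "h \<in> H" for h j
  proof -
    have mem: "h + zmul j g \<in> ?S" unfolding subgroup_adjoin_def using that by blast
    have "\<exists>p. fst p \<in> H \<and> h + zmul j g = fst p + zmul (snd p) g" using that by (intro exI[of _ "(h, j)"]) simp
    then have "fst (rep (h + zmul j g)) \<in> H
        \<and> h + zmul j g = fst (rep (h + zmul j g)) + zmul (snd (rep (h + zmul j g))) g"
      unfolding rep_def by (rule someI_ex)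
    then show ?thesis unfolding \<psi>_def using mem well_defined[OF that] by metis
  qed
  have "\<psi> \<in> characters ?S"
    unfolding characters_def
  proof (intro CollectI conjI ballI allI impI)
    fix a b assume "a \<in> ?S" "b \<in> ?S"
    then obtain h1 j1 h2 j2 where ab: "a = h1 + zmul j1 g" "b = h2 + zmul j2 g" "h1 \<in> H" "h2 \<in> H"
      unfolding subgroup_adjoin_def by blast
    have "a + b = (h1 + h2) + zmul (j1 + j2) g" unfolding ab zmul_add_left by (simp add: algebra_simps)
    then have "\<psi> (a + b) = \<chi> (h1 + h2) * w powi (j1 + j2)" using val add_subgroup_add[OF H ab(3,4)] by simp
    also have "\<dots> = (\<chi> h1 * w powi j1) * (\<chi> h2 * w powi j2)"
      using characters_mult[OF \<chi> ab(3,4)] power_int_add[of w j1 j2] wnz by simp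
    finally show "\<psi> (a + b) = \<psi> a * \<psi> b" using val ab by simp
  next
    fix a assume "a \<in> ?S"
    then obtain h j where "a = h + zmul j g" "h \<in> H" unfolding subgroup_adjoin_def by blast
    then show "cmod (\<psi> a) = 1" using val characters_norm[OF \<chi>] w by (simp add: norm_mult norm_power_int)
  next
    fix a assume "a \<notin> ?S" then show "\<psi> a = 0" unfolding \<psi>_def by simp
  qed
  moreover have "\<forall>h\<in>H. \<psi> h = \<chi> h" using val[of _ 0] by simp
  moreover have "\<psi> g = w" using val[OF add_subgroup_zero[OF H], of 1] characters_zero[OF H \<chi>] by simp
  ultimately show ?thesis by blast
qed

lemma character_extend:
  assumes A: "finite A" "add_subgroup A" and "add_subgroup H" "H \<subseteq> A" "\<chi> \<in> characters H"
  shows "\<exists>\<psi> \<in> characters A. \<forall>h\<in>H. \<psi> h = \<chi> h"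
  using assms(3-5)
proof (induction "card (A - H)" arbitrary: H \<chi> rule: less_induct)
  case less
  show ?case
  proof (cases "H = A")
    case True then show ?thesis using less.prems by blast
  next
    case False
    then obtain g where g: "g \<in> A" "g \<notin> H" using less.prems(2) by blast
    obtain k where k: "0 < k" "zmul (int k) g \<in> H" "\<forall>r. 0 < r \<and> r < k \<longrightarrow> zmul (int r) g \<notin> H"
      using exists_least_zmul_in_subgroup[OF A less.prems(1) g(1)] by blast
    define c where "c = \<chi> (zmul (int k) g)"
    have c: "cmod c = 1" unfolding c_def using characters_norm[OF less.prems(3) k(2)] .
    obtain \<psi>' where \<psi>': "\<psi>' \<in> characters (subgroup_adjoin H g)" "\<forall>h\<in>H. \<psi>' h = \<chi> h"
      using character_extend_adjoin[OF less.prems(1,3) _ k, of "cis (Arg c / real k)"]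
        cis_Arg_root_power[OF c k(1)] unfolding c_def by auto
    have sub: "subgroup_adjoin H g \<subseteq> A" using subgroup_adjoin_subset[OF A(2) less.prems(2) g(1)] .
    have "A - subgroup_adjoin H g \<subset> A - H"
      using g subgroup_adjoin_generator[OF less.prems(1)] subgroup_adjoin_base[of _ H g] by blast
    then have "card (A - subgroup_adjoin H g) < card (A - H)" using A(1) by (meson finite_Diff psubset_card_mono)
    then obtain \<psi> where "\<psi> \<in> characters A" "\<forall>h\<in>subgroup_adjoin H g. \<psi> h = \<psi>' h"
      using less.hyps[OF _ add_subgroup_adjoin[OF less.prems(1)] sub \<psi>'(1)] by blast
    then show ?thesis using \<psi>'(2) subgroup_adjoin_base[of _ H g] by metis
  qed
qed

lemma character_separates:
  assumes A: "finite A" "add_subgroup A" and a: "a \<in> A" "a \<noteq> 0"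
  shows "\<exists>\<chi> \<in> characters A. \<chi> a \<noteq> 1"
proof -
  have H0: "add_subgroup {0::'a}" by (simp add: add_subgroup_def)
  obtain k where k: "0 < k" "zmul (int k) a \<in> {0}" "\<forall>r. 0 < r \<and> r < k \<longrightarrow> zmul (int r) a \<notin> {0}"
    using exists_least_zmul_in_subgroup[OF A H0 a(1)] by blast
  have "k \<noteq> 1" using k(2) a(2) by auto
  then have "1 < k" using k(1) by simp
  define w where "w = cis (2 * pi / real k)"
  have "inj_on (\<lambda>j. cis (2 * pi * real j / real k)) {..<k}"
    using bij_betw_roots_unity[OF k(1)] unfolding bij_betw_def by blast
  then have "cis (2 * pi * real 1 / real k) \<noteq> cis (2 * pi * real 0 / real k)"
    using \<open>1 < k\<close> by (auto dest: inj_onD[of _ _ 1 0])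
  then have w1: "w \<noteq> 1" unfolding w_def by simp
  have "cmod w = 1" unfolding w_def by simp
  moreover have "w ^ k = indicator {0} (zmul (int k) a)" unfolding w_def using k by (simp add: DeMoivre)
  ultimately obtain \<psi>' where \<psi>': "\<psi>' \<in> characters (subgroup_adjoin {0} a)" "\<psi>' a = w"
    using character_extend_adjoin[OF H0 indicator_in_characters[OF H0] _ k] by blast
  obtain \<psi> where "\<psi> \<in> characters A" "\<forall>h\<in>subgroup_adjoin {0} a. \<psi> h = \<psi>' h"
    using character_extend[OF A add_subgroup_adjoin[OF H0] subgroup_adjoin_subset[OF A(2) _ a(1)] \<psi>'(1)]
      add_subgroup_zero[OF A(2)] by blast
  then show ?thesis using \<psi>' w1 subgroup_adjoin_generator[OF H0, of a] by metis
qed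

lemma sum_characters_at:
  assumes A: "finite A" "add_subgroup A" and a: "a \<in> A"
  shows "(\<Sum>\<chi>\<in>characters A. \<chi> a) = (if a = 0 then of_nat (card (characters A)) else 0)"
proof (cases "a = 0")
  case True
  have "(\<Sum>\<chi>\<in>characters A. \<chi> 0) = (\<Sum>\<chi>\<in>characters A. 1)"
    using characters_zero[OF A(2)] by (rule sum.cong[OF refl])
  then show ?thesis using True by simp
next
  case False
  obtain \<chi>0 where \<chi>0: "\<chi>0 \<in> characters A" "\<chi>0 a \<noteq> 1" using character_separates[OF A a False] by blast
  let ?C = "characters A"
  define \<Phi> where "\<Phi> \<chi> = (\<lambda>x. \<chi>0 x * \<chi> x)" for \<chi> :: "'a \<Rightarrow> complex"
  have "\<Phi> \<chi> \<in> ?C" if \<chi>: "\<chi> \<in> ?C" for \<chi>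
    unfolding characters_def \<Phi>_def
    using characters_mult[OF \<chi>] characters_mult[OF \<chi>0(1)] characters_norm[OF \<chi>] characters_norm[OF \<chi>0(1)]
      characters_outside[OF \<chi>0(1)] by (auto simp: norm_mult)
  then have "\<Phi> ` ?C \<subseteq> ?C" by blast
  moreover have inj: "inj_on \<Phi> ?C"
  proof (rule inj_onI)
    fix \<chi>1 \<chi>2 assume c: "\<chi>1 \<in> ?C" "\<chi>2 \<in> ?C" "\<Phi> \<chi>1 = \<Phi> \<chi>2"
    show "\<chi>1 = \<chi>2"
    proof
      fix x show "\<chi>1 x = \<chi>2 x"
      proof (cases "x \<in> A")
        case True
        have "\<chi>0 x * \<chi>1 x = \<chi>0 x * \<chi>2 x" using fun_cong[OF c(3), of x] unfolding \<Phi>_def .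
        then show ?thesis using characters_nonzero[OF \<chi>0(1) True] by simp
      qed (simp add: characters_outside[OF c(1)] characters_outside[OF c(2)])
    qed
  qed
  ultimately have "\<Phi> ` ?C = ?C" using endo_inj_surj[OF finite_characters[OF A]] by blast
  then have "(\<Sum>\<chi>\<in>?C. \<chi> a) = (\<Sum>\<chi>\<in>?C. \<Phi> \<chi> a)" using sum.reindex[OF inj, of "\<lambda>\<chi>. \<chi> a"] by simp
  also have "\<dots> = \<chi>0 a * (\<Sum>\<chi>\<in>?C. \<chi> a)" unfolding \<Phi>_def by (simp add: sum_distrib_left)
  finally have "(1 - \<chi>0 a) * (\<Sum>\<chi>\<in>?C. \<chi> a) = 0" by (simp add: algebra_simps)
  then show ?thesis using \<chi>0(2) False by simp
qed

lemma sum_character: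
  assumes A: "finite A" "add_subgroup A" and \<chi>: "\<chi> \<in> characters A"
  shows "(\<Sum>a\<in>A. \<chi> a) = (if \<chi> = indicator A then of_nat (card A) else 0)"
proof (cases "\<chi> = indicator A")
  case True then show ?thesis by (simp add: indicator_def)
next
  case False
  have "\<exists>b\<in>A. \<chi> b \<noteq> 1"
  proof (rule ccontr)
    assume "\<not> (\<exists>b\<in>A. \<chi> b \<noteq> 1)"
    then have "\<chi> = indicator A" using characters_outside[OF \<chi>] by (auto simp: fun_eq_iff indicator_def)
    then show False using False by simp
  qed
  then obtain b where b: "b \<in> A" "\<chi> b \<noteq> 1" by blast
  have "(\<Sum>a\<in>A. \<chi> a) = (\<Sum>a\<in>A. \<chi> (b + a))" using sum_translate[OF A b(1), of \<chi>] by simp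
  also have "\<dots> = \<chi> b * (\<Sum>a\<in>A. \<chi> a)"
    using characters_mult[OF \<chi> b(1)] by (simp add: sum_distrib_left)
  finally have "(1 - \<chi> b) * (\<Sum>a\<in>A. \<chi> a) = 0" by (simp add: algebra_simps)
  then show ?thesis using b(2) False by simp
qed

text \<open>Double counting \<open>\<Sum>\<^sub>a \<Sum>\<^sub>\<chi> \<chi> a\<close> with both orthogonality relations.\<close>
lemma card_characters:
  assumes A: "finite A" "add_subgroup A"
  shows "card (characters A) = card A"
proof -
  let ?C = "characters A"
  have "(\<Sum>a\<in>A. \<Sum>\<chi>\<in>?C. \<chi> a) = (of_nat (card ?C) :: complex)"
    using A add_subgroup_zero[OF A(2)] by (simp add: sum_characters_at sum.delta cong: sum.cong)
  moreover have "(\<Sum>\<chi>\<in>?C. \<Sum>a\<in>A. \<chi> a) = (of_nat (card A) :: complex)"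
    using finite_characters[OF A] indicator_in_characters[OF A(2)]
    by (simp add: sum_character[OF A] sum.delta cong: sum.cong)
  moreover have "(\<Sum>a\<in>A. \<Sum>\<chi>\<in>?C. \<chi> a) = (\<Sum>\<chi>\<in>?C. \<Sum>a\<in>A. \<chi> a)" by (rule sum.swap)
  ultimately show ?thesis by (simp only: of_nat_eq_iff)
qed
locale hom_complex =
  fixes K :: "int \<Rightarrow> 'k set" and dC :: "int \<Rightarrow> 'k \<Rightarrow> 'k \<Rightarrow> int"
    and G :: "int \<Rightarrow> 'g::ab_group_add set" and dG :: "int \<Rightarrow> 'g \<Rightarrow> 'g"
  assumes free_chain_complex: "free_chain_complex K dC"
    and finite_group_chain_complex: "finite_group_chain_complex G dG"
begin

lemma finite_K: "finite (K n)"
  using free_chain_complex by (simp add: free_chain_complex_def)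

lemma finite_nonempty_degrees: "finite {n. K n \<noteq> {}}"
  using free_chain_complex by (simp add: free_chain_complex_def)

lemma dC_dC: "x \<in> K n \<Longrightarrow> z \<in> K (n - 2) \<Longrightarrow> (\<Sum>y\<in>K (n - 1). dC n x y * dC (n - 1) y z) = 0"
  using free_chain_complex by (simp add: free_chain_complex_def)

lemma add_subgroup_G: "add_subgroup (G n)"
  using finite_group_chain_complex by (simp add: finite_group_chain_complex_def add_subgroup_def)

lemma finite_G: "finite (G n)"
  using finite_group_chain_complex by (simp add: finite_group_chain_complex_def)

lemma dG_mem: "a \<in> G n \<Longrightarrow> dG n a \<in> G (n - 1)"
  using finite_group_chain_complex by (simp add: finite_group_chain_complex_def)

lemma additive_on_dG: "additive_on (G n) (dG n)"
  using finite_group_chain_complex by (simp add: finite_group_chain_complex_def additive_on_def)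

lemma dG_dG: "a \<in> G n \<Longrightarrow> dG (n - 1) (dG n a) = 0"
  using finite_group_chain_complex by (simp add: finite_group_chain_complex_def)

abbreviation C where "C p \<equiv> cochains K G p"
abbreviation \<delta> where "\<delta> p \<equiv> coboundary K dC dG p"

lemma cochains_mem: "f \<in> C p \<Longrightarrow> x \<in> K n \<Longrightarrow> f n x \<in> G (n - p)"
  by (simp add: cochains_def)

lemma cochains_outside: "f \<in> C p \<Longrightarrow> x \<notin> K n \<Longrightarrow> f n x = 0"
  by (simp add: cochains_def)

lemma add_subgroup_cochains: "add_subgroup (C p)"
  using add_subgroup_G unfolding cochains_def by (auto simp: add_subgroup_def)

text \<open>Outside the finitely many nonempty degrees a cochain vanishes, and in each of them it is a
  function from a finite set into a finite set.\<close>
lemma finite_cochains: "finite (C p)"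
proof -
  define N where "N = {n. K n \<noteq> {}}"
  define KN where "KN = (\<Union>n\<in>N. K n)"
  define GN where "GN = (\<Union>n\<in>N. G (n - p))"
  have N: "finite N" unfolding N_def by (rule finite_nonempty_degrees)
  have "finite KN" "finite GN" unfolding KN_def GN_def using N finite_K finite_G by auto
  then have B: "finite {g. \<forall>x. (x \<in> KN \<longrightarrow> g x \<in> GN) \<and> (x \<notin> KN \<longrightarrow> g x = 0)}" (is "finite ?B")
    by (rule finite_set_of_finite_funs)
  have "C p \<subseteq> {f. \<forall>n. (n \<in> N \<longrightarrow> f n \<in> ?B) \<and> (n \<notin> N \<longrightarrow> f n = (\<lambda>x. 0))}"
  proof safe
    fix f n x assume f: "f \<in> C p" and n: "n \<in> N"
    show "x \<in> KN \<Longrightarrow> f n x \<in> GN"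
      using cochains_mem[OF f] cochains_outside[OF f] add_subgroup_zero[OF add_subgroup_G] n
      unfolding GN_def by (cases "x \<in> K n") auto
    show "x \<notin> KN \<Longrightarrow> f n x = 0" using cochains_outside[OF f] n unfolding KN_def by blast
  next
    fix f n assume "f \<in> C p" "n \<notin> N"
    then show "f n = (\<lambda>x. 0)" using cochains_outside unfolding N_def by auto
  qed
  then show ?thesis using finite_set_of_finite_funs[OF N B] finite_subset by blast
qed

lemma card_cochains_pos: "card (C p) > 0"
  using finite_cochains add_subgroup_zero[OF add_subgroup_cochains] card_gt_0_iff by blast

lemma card_G_pos: "card (G n) > 0"
  using finite_G add_subgroup_zero[OF add_subgroup_G] card_gt_0_iff by blast

lemma coboundary_in: "x \<in> K n \<Longrightarrow> \<delta> p f n x = (\<Sum>y\<in>K (n - 1). zmul (dC n x y) (f (n - 1) y))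
    - (if even p then dG (n - p) (f n x) else - dG (n - p) (f n x))"
  by (simp add: coboundary_def)

lemma coboundary_outside: "x \<notin> K n \<Longrightarrow> \<delta> p f n x = 0"
  by (simp add: coboundary_def)

lemma coboundary_mem: assumes f: "f \<in> C p" shows "\<delta> p f \<in> C (p + 1)"
  unfolding cochains_def
proof (intro CollectI conjI allI ballI impI)
  fix n x assume x: "x \<in> K n"
  have "(\<Sum>y\<in>K (n - 1). zmul (dC n x y) (f (n - 1) y)) \<in> G (n - 1 - p)"
    using add_subgroup_G cochains_mem[OF f]
    by (intro add_subgroup_sum add_subgroup_zmul) auto
  moreover have "dG (n - p) (f n x) \<in> G (n - p - 1)" using dG_mem[OF cochains_mem[OF f x]] .
  ultimately show "\<delta> p f n x \<in> G (n - (p + 1))"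
    unfolding coboundary_in[OF x] using add_subgroup_diff[OF add_subgroup_G] add_subgroup_minus[OF add_subgroup_G]
    by (auto simp: algebra_simps)
qed (rule coboundary_outside)

lemma additive_on_coboundary: "additive_on (C p) (\<delta> p)"
  unfolding additive_on_def
proof (intro ballI ext)
  fix f f' n x assume f: "f \<in> C p" and f': "f' \<in> C p"
  show "\<delta> p (f + f') n x = (\<delta> p f + \<delta> p f') n x"
  proof (cases "x \<in> K n")
    case True
    then show ?thesis
      using additive_onD[OF additive_on_dG cochains_mem[OF f True] cochains_mem[OF f' True]]
      unfolding plus_fun_apply coboundary_in[OF True]
      by (simp add: zmul_add_right sum.distrib algebra_simps)
  qed (simp add: coboundary_outside)
qed

lemma sum_dC_zmul_sum_dC_zmul:
  assumes x: "x \<in> K n"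
  shows "(\<Sum>y\<in>K (n - 1). zmul (dC n x y) (\<Sum>z\<in>K (n - 2). zmul (dC (n - 1) y z) (v z))) = 0"
proof -
  have "(\<Sum>y\<in>K (n - 1). zmul (dC n x y) (\<Sum>z\<in>K (n - 2). zmul (dC (n - 1) y z) (v z)))
      = (\<Sum>y\<in>K (n - 1). \<Sum>z\<in>K (n - 2). zmul (dC n x y * dC (n - 1) y z) (v z))"
    by (simp add: zmul_sum_right zmul_mult)
  also have "\<dots> = (\<Sum>z\<in>K (n - 2). zmul (\<Sum>y\<in>K (n - 1). dC n x y * dC (n - 1) y z) (v z))"
    by (subst sum.swap) (simp add: zmul_sum_left)
  also have "\<dots> = 0" using dC_dC[OF x] by simp
  finally show ?thesis .
qed

lemma coboundary_coboundary: assumes t: "t \<in> C (-1)" shows "\<delta> 0 (\<delta> (-1) t) = 0"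
proof (intro ext)
  fix n x
  show "\<delta> 0 (\<delta> (-1) t) n x = (0 :: int \<Rightarrow> 'k \<Rightarrow> 'g) n x"
  proof (cases "x \<in> K n")
    case x: True
    let ?s = "\<delta> (-1) t" and ?c = "dC n x"
    have t_mem: "t m y \<in> G (m + 1)" if "y \<in> K m" for m y using cochains_mem[OF t that] by simp
    have s: "?s m y = (\<Sum>z\<in>K (m - 1). zmul (dC m y z) (t (m - 1) z)) + dG (m + 1) (t m y)"
      if "y \<in> K m" for m y
      using coboundary_in[OF that, of "-1" t] by simp
    have "(\<Sum>y\<in>K (n - 1). zmul (?c y) (?s (n - 1) y))
        = (\<Sum>y\<in>K (n - 1). zmul (?c y) (\<Sum>z\<in>K (n - 2). zmul (dC (n - 1) y z) (t (n - 2) z)))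
          + (\<Sum>y\<in>K (n - 1). zmul (?c y) (dG n (t (n - 1) y)))"
      by (simp add: s zmul_add_right sum.distrib algebra_simps cong: sum.cong)
    also have "\<dots> = (\<Sum>y\<in>K (n - 1). zmul (?c y) (dG n (t (n - 1) y)))"
      using sum_dC_zmul_sum_dC_zmul[OF x] by simp
    also have "\<dots> = dG n (\<Sum>y\<in>K (n - 1). zmul (?c y) (t (n - 1) y))"
      using t_mem[where m = "n - 1"]
      by (simp add: additive_on_sum[OF add_subgroup_G additive_on_dG] add_subgroup_zmul[OF add_subgroup_G]
          additive_on_zmul[OF add_subgroup_G additive_on_dG])
    also have "\<dots> = dG n (?s n x)"
    proof -
      have "(\<Sum>y\<in>K (n - 1). zmul (?c y) (t (n - 1) y)) \<in> G n"
        using t_mem[where m = "n - 1"] add_subgroup_G by (intro add_subgroup_sum add_subgroup_zmul) auto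
      moreover have "dG (n + 1) (t n x) \<in> G n" using dG_mem[OF t_mem[OF x]] by simp
      ultimately show ?thesis
        unfolding s[OF x] using additive_onD[OF additive_on_dG] dG_dG[OF t_mem[OF x]] by simp
    qed
    finally show ?thesis using coboundary_in[OF x, of 0 ?s] by simp
  qed (simp add: coboundary_outside)
qed

lemma local_cochain_mem: "x \<in> K n \<Longrightarrow> g \<in> G (n - p) \<Longrightarrow> local_cochain n x g \<in> C p"
  unfolding cochains_def local_cochain_def using add_subgroup_zero[OF add_subgroup_G] by auto

lemma local_cochain_add: "local_cochain n x (a + b) = local_cochain n x a + local_cochain n x (b::'g)"
  unfolding local_cochain_def by (simp add: fun_eq_iff)

lemma cochain_eq_sum_local_cochains:
  assumes t: "t \<in> C p"
  shows "t = (\<Sum>q\<in>Sigma {n. K n \<noteq> {}} K. local_cochain (fst q) (snd q) (t (fst q) (snd q)))"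
proof (intro ext)
  fix m y
  have "(\<Sum>q\<in>Sigma {n. K n \<noteq> {}} K. local_cochain (fst q) (snd q) (t (fst q) (snd q))) m y
      = (\<Sum>q\<in>Sigma {n. K n \<noteq> {}} K. if q = (m, y) then t m y else 0)"
    unfolding sum_apply local_cochain_def by (intro sum.cong refl) (auto simp: prod_eq_iff)
  also have "\<dots> = t m y"
    using finite_SigmaI[OF finite_nonempty_degrees finite_K] cochains_outside[OF t] by auto
  finally show "t m y = (\<Sum>q\<in>Sigma {n. K n \<noteq> {}} K. local_cochain (fst q) (snd q) (t (fst q) (snd q))) m y"
    by simp
qed

lemma calA0_apply:
  "calA0 K dC G dG \<Phi> h = (\<Sum>t\<in>C (-1). \<Phi> (h - \<delta> (-1) t)) / of_nat (card (C (-1)))"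
  unfolding calA0_def Aop_def Pop_def ..

lemma calB0_apply: "calB0 K dC G dG \<Psi> h = (if h \<in> C 0 \<and> \<delta> 0 h = 0 then \<Psi> h else 0)"
proof (cases "h \<in> C 0")
  case True
  have \<delta>h: "\<delta> 0 h \<in> C 1" using coboundary_mem[OF True] by simp
  have "(\<Sum>m\<in>chains_dual K G 1. Bop K dC G dG m \<Psi> h) = (\<Sum>m\<in>characters (C 1). m (\<delta> 0 h)) * \<Psi> h"
    unfolding Bop_def Qop_def dual_boundary_def chains_dual_def using True by (simp add: sum_distrib_right)
  then show ?thesis
    using True card_cochains_pos[of 1]
    unfolding calB0_def chains_dual_def sum_characters_at[OF finite_cochains add_subgroup_cochains \<delta>h]
      card_characters[OF finite_cochains add_subgroup_cochains]
    by simp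
qed (simp add: calB0_def Bop_def Qop_def dual_boundary_def)

lemma Ax0_apply: "Ax0 K dC G dG n x \<Psi> h
    = (\<Sum>g\<in>G (n + 1). \<Psi> (h - \<delta> (-1) (local_cochain n x g))) / of_nat (card (G (n + 1)))"
  unfolding Ax0_def Aop_def Pop_def ..

lemma Bx0_apply:
  assumes x: "x \<in> K n"
  shows "Bx0 K dC G dG n x \<Psi> h = (if h \<in> C 0 \<and> \<delta> 0 h n x = 0 then \<Psi> h else 0)"
proof (cases "h \<in> C 0")
  case True
  have \<delta>h: "\<delta> 0 h n x \<in> G (n - 1)" using cochains_mem[OF coboundary_mem[OF True] x] by simp
  have "Bx0 K dC G dG n x \<Psi> h
      = (\<Sum>r\<in>characters (G (n - 1)). r (\<delta> 0 h n x)) * \<Psi> h / of_nat (card (G (n - 1)))"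
    unfolding Bx0_def Bop_def Qop_def dual_boundary_def local_chain_def
    using True coboundary_mem[OF True] by (simp add: sum_distrib_right)
  then show ?thesis
    using True card_G_pos[of "n - 1"]
    unfolding sum_characters_at[OF finite_G add_subgroup_G \<delta>h] card_characters[OF finite_G add_subgroup_G]
    by simp
qed (simp add: Bx0_def Bop_def Qop_def dual_boundary_def)

definition gauge_invariant :: "((int \<Rightarrow> 'k \<Rightarrow> 'g) \<Rightarrow> complex) \<Rightarrow> bool" where
  "gauge_invariant \<Psi> \<longleftrightarrow> (\<forall>t\<in>C (-1). \<forall>h. \<Psi> (h - \<delta> (-1) t) = \<Psi> h)"

definition supported_on_cocycles :: "((int \<Rightarrow> 'k \<Rightarrow> 'g) \<Rightarrow> complex) \<Rightarrow> bool" where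
  "supported_on_cocycles \<Psi> \<longleftrightarrow> (\<forall>h. \<Psi> h \<noteq> 0 \<longrightarrow> \<delta> 0 h = 0)"

lemma hilb_outside: "\<Psi> \<in> hilb K G \<Longrightarrow> h \<notin> C 0 \<Longrightarrow> \<Psi> h = 0"
  by (simp add: hilb_def)

lemma Pi0_fixed_iff:
  assumes \<Psi>: "\<Psi> \<in> hilb K G"
  shows "Pi0 K dC G dG \<Psi> = \<Psi> \<longleftrightarrow> gauge_invariant \<Psi> \<and> supported_on_cocycles \<Psi>"
proof
  assume fixed: "Pi0 K dC G dG \<Psi> = \<Psi>"
  define \<Phi> where "\<Phi> = calB0 K dC G dG \<Psi>"
  have avg: "\<Psi> h = (\<Sum>t\<in>C (-1). \<Phi> (h - \<delta> (-1) t)) / of_nat (card (C (-1)))" for h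
    using fun_cong[OF fixed, of h] unfolding Pi0_def \<Phi>_def calA0_apply by simp
  have inv: "gauge_invariant \<Psi>"
    unfolding gauge_invariant_def
    using average_translates_invariant[where A = "C (-1)" and \<phi> = "\<delta> (-1)",
        OF finite_cochains add_subgroup_cochains additive_on_coboundary avg]
    by blast
  have "\<delta> 0 h = 0" if nz: "\<Psi> h \<noteq> 0" for h
  proof -
    have h: "h \<in> C 0" using hilb_outside[OF \<Psi>] nz by blast
    have "\<Phi> (h - \<delta> (-1) t) = (if \<delta> 0 h = 0 then \<Psi> h else 0)" if t: "t \<in> C (-1)" for t
    proof -
      have \<delta>t: "\<delta> (-1) t \<in> C 0" using coboundary_mem[OF t] by simp
      have "\<delta> 0 (h - \<delta> (-1) t) = \<delta> 0 h"
        using additive_on_diff[OF add_subgroup_cochains additive_on_coboundary h \<delta>t] coboundary_coboundary[OF t]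
        by simp
      then show ?thesis
        using add_subgroup_diff[OF add_subgroup_cochains h \<delta>t] inv t
        unfolding \<Phi>_def calB0_apply gauge_invariant_def by simp
    qed
    then have "\<Psi> h = (if \<delta> 0 h = 0 then \<Psi> h else 0)"
      using avg[of h] card_cochains_pos[of "-1"] by simp
    then show ?thesis using nz by presburger
  qed
  then show "gauge_invariant \<Psi> \<and> supported_on_cocycles \<Psi>"
    using inv unfolding supported_on_cocycles_def by blast
next
  assume "gauge_invariant \<Psi> \<and> supported_on_cocycles \<Psi>"
  then have inv: "gauge_invariant \<Psi>" and supp: "supported_on_cocycles \<Psi>" by blast+
  have "calB0 K dC G dG \<Psi> = \<Psi>"
    using hilb_outside[OF \<Psi>] supp unfolding calB0_apply supported_on_cocycles_def by (auto simp: fun_eq_iff)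
  moreover have "calA0 K dC G dG \<Psi> = \<Psi>"
    using inv card_cochains_pos[of "-1"] unfolding calA0_apply gauge_invariant_def by (simp add: fun_eq_iff)
  ultimately show "Pi0 K dC G dG \<Psi> = \<Psi>" unfolding Pi0_def by simp
qed

lemma additive_on_local_coboundary:
  assumes "x \<in> K n"
  shows "additive_on (G (n + 1)) (\<lambda>g. \<delta> (-1) (local_cochain n x g))"
  using additive_onD[OF additive_on_coboundary] local_cochain_mem[OF assms, of _ "-1"]
  unfolding additive_on_def by (simp add: local_cochain_add)

text \<open>Every cochain is a sum of local ones, so invariance under all \<open>A\<^sub>x\<close> gives gauge invariance.\<close>
lemma Ax0_fixed_iff: "(\<forall>n. \<forall>x\<in>K n. Ax0 K dC G dG n x \<Psi> = \<Psi>) \<longleftrightarrow> gauge_invariant \<Psi>"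
proof
  assume fixed: "\<forall>n. \<forall>x\<in>K n. Ax0 K dC G dG n x \<Psi> = \<Psi>"
  have local_inv: "\<Psi> (h - \<delta> (-1) (local_cochain n x g)) = \<Psi> h"
    if x: "x \<in> K n" and g: "g \<in> G (n + 1)" for n x g h
  proof -
    have "\<Psi> h' = (\<Sum>g\<in>G (n + 1). \<Psi> (h' - \<delta> (-1) (local_cochain n x g))) / of_nat (card (G (n + 1)))"
      for h'
      using fun_cong[OF fixed[rule_format, OF x], of h'] unfolding Ax0_apply by simp
    then show ?thesis
      using average_translates_invariant[OF finite_G add_subgroup_G additive_on_local_coboundary[OF x] _ g]
      by blast
  qed
  show "gauge_invariant \<Psi>"
    unfolding gauge_invariant_def
  proof (intro ballI allI)
    fix t h assume t: "t \<in> C (-1)"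
    let ?S = "Sigma {n. K n \<noteq> {}} K" and ?l = "\<lambda>q. local_cochain (fst q) (snd q) (t (fst q) (snd q))"
    have l: "?l q \<in> C (-1)" if "q \<in> ?S" for q
      using that cochains_mem[OF t] by (auto intro: local_cochain_mem)
    have "\<Psi> (h - (\<Sum>q\<in>?S. \<delta> (-1) (?l q))) = \<Psi> h"
      by (rule invariant_sum[where d = "\<lambda>q. \<delta> (-1) (?l q)"], rule local_inv) (use cochains_mem[OF t] in auto)
    then show "\<Psi> (h - \<delta> (-1) t) = \<Psi> h"
      using cochain_eq_sum_local_cochains[OF t]
        additive_on_sum[OF add_subgroup_cochains additive_on_coboundary, of ?S ?l] l by simp
  qed
next
  assume "gauge_invariant \<Psi>"
  then show "\<forall>n. \<forall>x\<in>K n. Ax0 K dC G dG n x \<Psi> = \<Psi>"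
    using local_cochain_mem card_G_pos unfolding gauge_invariant_def by (simp add: Ax0_apply fun_eq_iff)
qed

lemma Bx0_fixed_iff:
  assumes \<Psi>: "\<Psi> \<in> hilb K G"
  shows "(\<forall>n. \<forall>x\<in>K n. Bx0 K dC G dG n x \<Psi> = \<Psi>) \<longleftrightarrow> supported_on_cocycles \<Psi>"
proof
  assume fixed: "\<forall>n. \<forall>x\<in>K n. Bx0 K dC G dG n x \<Psi> = \<Psi>"
  have "\<delta> 0 h n x = 0" if "\<Psi> h \<noteq> 0" for h n x
    using fun_cong[OF fixed[rule_format], of x n h] that coboundary_outside[of x n]
    by (cases "x \<in> K n") (auto simp: Bx0_apply split: if_splits)
  then show "supported_on_cocycles \<Psi>" unfolding supported_on_cocycles_def by (simp add: fun_eq_iff)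
next
  assume "supported_on_cocycles \<Psi>"
  then show "\<forall>n. \<forall>x\<in>K n. Bx0 K dC G dG n x \<Psi> = \<Psi>"
    using hilb_outside[OF \<Psi>] unfolding supported_on_cocycles_def by (auto simp: Bx0_apply fun_eq_iff)
qed

lemma ground_space_iff:
  assumes "\<Psi> \<in> hilb K G"
  shows "\<Psi> \<in> ground_space K dC G dG \<longleftrightarrow> gauge_invariant \<Psi> \<and> supported_on_cocycles \<Psi>"
  using assms Ax0_fixed_iff[of \<Psi>] Bx0_fixed_iff[OF assms] unfolding ground_space_def by blast

end

theorem proposition2:
  fixes K :: "int \<Rightarrow> 'k set" and dC :: "int \<Rightarrow> 'k \<Rightarrow> 'k \<Rightarrow> int"
    and G :: "int \<Rightarrow> 'g::ab_group_add set" and dG :: "int \<Rightarrow> 'g \<Rightarrow> 'g"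
    and \<Psi> :: "(int \<Rightarrow> 'k \<Rightarrow> 'g) \<Rightarrow> complex"
  assumes "free_chain_complex K dC"
    and "finite_group_chain_complex G dG"
    and "\<Psi> \<in> hilb K G"
  shows "\<Psi> \<in> ground_space K dC G dG \<longleftrightarrow> Pi0 K dC G dG \<Psi> = \<Psi>"
proof -
  interpret hom_complex K dC G dG using assms(1,2) by unfold_locales
  show ?thesis using ground_space_iff[OF assms(3)] Pi0_fixed_iff[OF assms(3)] by simp
qed

end
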